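(* Let $\hat\alpha\in\{-2,-3,\dots\}$ and let $\mathcal F=(F_1,F_2)$ be a pair of finite sets of positive integers satisfying $\{0,1,\dots,-\hat\alpha-1\}\subset F_1\cup(-\hat\alpha-1-F_2)$, and assume that $\hat c=\hat\alpha+1$ and $\mathcal F$ are admissible (i.e. $\prod_{h\in\mathcal H}(x-h)\ge0$ for all $x\in\mathbb N\setminus F_1$). Then $\hat\alpha+s_{\mathcal F}\ne-1$, and: (1) if $\hat\alpha+s_{\mathcal F}\le-2$, then $\hat c'=\hat\alpha+1+s_{\mathcal F}$ and $\mathcal F_\Downarrow=(F'_1,F'_2)$ satisfy $\{0,1,\dots,-\hat c'\}\subset F'_1\cup(-\hat c'-F'_2)$ and are admissible in the same sense; (2) if $\hat\alpha+s_{\mathcal F}\ge0$, then $d=\hat\alpha+1+s_{\mathcal F}$ and $\mathcal F_\Downarrow=(F'_1,F'_2)$ are admissible in the sense that $\prod_{f\in F'_1}(x-f)\prod_{f\in F'_2}(x+d+f)\Gamma(x+d)\ge0$ for all $x\in\mathbb N$.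
   Context: $\mathbb N=\{0,1,\dots\}$; $t-F=\{t-f:f\in F\}$. For $\hat c\in\{0,-1,\dots\}$ and pair $(F_1,F_2)$: $\mathcal H=[(F_1\cup(-\hat c-F_2))\setminus\{0,\dots,-\hat c\}]\cup[F_1\cap(-\hat c-F_2)]$. For a finite set $F=\{f_1<\dots<f_{n_F}\}$ of positive integers: $s_F=1$ if $F=\emptyset$; $s_F=n_F+1$ if $F=\{1,\dots,n_F\}$; otherwise $s_F=\min\{s\ge1:s<f_s\}$. $F_\Downarrow=\emptyset$ if $F=\emptyset$ or $F=\{1,\dots,n_F\}$; otherwise $F_\Downarrow=\{f_{s_F}-s_F,\dots,f_{n_F}-s_F\}$. For a pair, $s_{\mathcal F}=s_{F_1}$ and $\mathcal F_\Downarrow=((F_1)_\Downarrow,F_2)$. *)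

theory Defs
  imports "HOL-Analysis.Analysis"
begin

text \<open>Finite sets of positive integers are modelled as int sets.
  For F = {f_1 < ... < f_n}, f_s is (sorted_list_of_set F) ! (s-1).\<close>

definition s_idx :: "int set \<Rightarrow> nat" where
  "s_idx F = (let n = card F; xs = sorted_list_of_set F in
     if F = {} then 1
     else if F = {1..int n} then n + 1
     else (LEAST s. 1 \<le> s \<and> s \<le> n \<and> int s < xs ! (s - 1)))"

definition F_down :: "int set \<Rightarrow> int set" where
  "F_down F = (let n = card F; xs = sorted_list_of_set F; s = s_idx F in
     if F = {} \<or> F = {1..int n} then {}
     else {xs ! i - int s | i. s - 1 \<le> i \<and> i < n})"

definition H_set :: "int \<Rightarrow> int set \<Rightarrow> int set \<Rightarrow> int set" where
  "H_set c F1 F2 =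
     ((F1 \<union> ((\<lambda>f. - c - f) ` F2)) - {0..-c}) \<union> (F1 \<inter> ((\<lambda>f. - c - f) ` F2))"

definition admissible :: "int \<Rightarrow> int set \<Rightarrow> int set \<Rightarrow> bool" where
  "admissible c F1 F2 \<longleftrightarrow>
     (\<forall>x::int. 0 \<le> x \<and> x \<notin> F1 \<longrightarrow> (\<Prod>h\<in>H_set c F1 F2. x - h) \<ge> 0)"

end

(*
  s = s_idx F1 is the least positive integer missing from F1, so F1 contains 1, ..., s - 1 and
  F_down F1 = {f - s | f \<in> F1, f > s}. The covering hypothesis forces m = -\<alpha> - 1 into both
  F1 and F2, hence s \<noteq> m. If s < m, the new set H is the old one with 0 added, shifted by -s,
  so the new admissibility product at x is (x + s) times the old one at x + s. If s > m, the
  elements of F1 above s all lie in the old H and the rest of H lies below s, so the product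
  over F_down F1 at x has the sign of the old admissibility product at x + s.
*)
theory Submission imports Defs begin

lemma strict_sorted_nth_gap:
  fixes xs :: "int list"
  assumes "sorted_wrt (<) xs" "i \<le> j" "j < length xs"
  shows "xs ! i + int (j - i) \<le> xs ! j"
  using assms(2,3)
proof (induction j)
  case 0
  then show ?case by simp
next
  case (Suc j)
  show ?case
  proof (cases "i = Suc j")
    case False
    then have "i \<le> j" using Suc.prems by simp
    then have "xs ! i + int (j - i) \<le> xs ! j" using Suc by simp
    moreover have "xs ! j < xs ! Suc j"
      using assms(1) Suc.prems by (simp add: sorted_wrt_iff_nth_less)
    ultimately show ?thesis using \<open>i \<le> j\<close> by (simp add: Suc_diff_le)
  qed simp
qed

lemma sorted_list_of_set_nth_ge:
  fixes F :: "int set"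
  assumes "finite F" "\<forall>f\<in>F. f > 0" "i < card F"
  shows "int i + 1 \<le> sorted_list_of_set F ! i"
proof -
  let ?xs = "sorted_list_of_set F"
  have "0 < ?xs ! 0"
    using assms by (metis gr_implies_not0 length_sorted_list_of_set nth_mem
      set_sorted_list_of_set neq0_conv)
  moreover have "?xs ! 0 + int i \<le> ?xs ! i"
    using strict_sorted_nth_gap[of ?xs 0 i] assms by (simp add: strict_sorted_list_of_set)
  ultimately show ?thesis by simp
qed

lemma s_idx_sorted_nth:
  fixes F :: "int set"
  assumes "finite F" "\<forall>f\<in>F. f > 0" "F \<noteq> {}" "F \<noteq> {1..int (card F)}"
  defines "xs \<equiv> sorted_list_of_set F" and "s \<equiv> s_idx F"
  shows "1 \<le> s" and "s \<le> card F" and "int s < xs ! (s - 1)"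
    and "\<And>k. 1 \<le> k \<Longrightarrow> k < s \<Longrightarrow> xs ! (k - 1) = int k"
proof -
  define n where "n = card F"
  define P where "P s \<longleftrightarrow> 1 \<le> s \<and> s \<le> n \<and> int s < xs ! (s - 1)" for s
  have s_Least: "s = (LEAST s. P s)"
    using assms(3,4) by (simp add: s_def s_idx_def Let_def P_def n_def xs_def)
  have "\<exists>s. P s"
  proof (rule ccontr)
    assume no_P: "\<not> (\<exists>s. P s)"
    have "F \<subseteq> {1..int n}"
    proof
      fix f assume "f \<in> F"
      then obtain i where i: "i < n" "f = xs ! i"
        using assms(1) by (metis in_set_conv_nth length_sorted_list_of_set
          set_sorted_list_of_set n_def xs_def)
      have "\<not> P (i + 1)" using no_P by blast
      then have "xs ! i \<le> int i + 1" using i(1) unfolding P_def by simp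
      moreover have "int i + 1 \<le> xs ! i"
        using sorted_list_of_set_nth_ge[OF assms(1,2)] i(1) by (simp add: n_def xs_def)
      ultimately show "f \<in> {1..int n}" using i by simp
    qed
    then have "F = {1..int n}" by (simp add: card_subset_eq n_def)
    then show False using assms(4) n_def by simp
  qed
  then have "P s" unfolding s_Least by (rule LeastI_ex)
  then show "1 \<le> s" "s \<le> card F" "int s < xs ! (s - 1)" unfolding P_def n_def by auto
  show "xs ! (k - 1) = int k" if "1 \<le> k" "k < s" for k
  proof -
    have "\<not> P k" using that(2) not_less_Least s_Least by blast
    moreover have "k \<le> n" using \<open>P s\<close> that(2) unfolding P_def by simp
    ultimately show ?thesis
      using sorted_list_of_set_nth_ge[OF assms(1,2), of "k - 1"] that(1)
      unfolding P_def xs_def n_def by fastforce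
  qed
qed

lemma s_idx_least_missing:
  fixes F :: "int set"
  assumes "finite F" "\<forall>f\<in>F. f > 0"
  shows "1 \<le> s_idx F" and "int (s_idx F) \<notin> F"
    and "\<And>k. 1 \<le> k \<Longrightarrow> k < int (s_idx F) \<Longrightarrow> k \<in> F"
proof -
  define n where "n = card F"
  define xs where "xs = sorted_list_of_set F"
  define s where "s = s_idx F"
  have set_xs: "set xs = F" and len_xs: "length xs = n" and sorted_xs: "sorted_wrt (<) xs"
    using assms(1) by (simp_all add: xs_def n_def strict_sorted_list_of_set)
  have "1 \<le> s \<and> int s \<notin> F \<and> (\<forall>k. 1 \<le> k \<and> k < int s \<longrightarrow> k \<in> F)"
  proof (cases "F = {} \<or> F = {1..int n}")
    case True
    then have "s = (if F = {} then 1 else n + 1)" by (auto simp: s_def s_idx_def n_def)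
    with True show ?thesis by auto
  next
    case False
    then have F: "F \<noteq> {}" "F \<noteq> {1..int (card F)}" by (auto simp: n_def)
    note sn = s_idx_sorted_nth[OF assms F, folded xs_def s_def n_def]
    have "int s \<notin> F"
    proof
      assume "int s \<in> F"
      then obtain j where j: "j < n" "xs ! j = int s" using set_xs len_xs by (metis in_set_conv_nth)
      show False
      proof (cases "j + 1 < s")
        case True
        then show False using sn(4)[of "j + 1"] j by simp
      next
        case False
        then have "s - 1 \<le> j" by simp
        then show False
          using strict_sorted_nth_gap[OF sorted_xs, of "s - 1" j] sn(3) j len_xs by simp
      qed
    qed
    moreover have "k \<in> F" if "1 \<le> k" "k < int s" for k
    proof -
      have "xs ! (nat k - 1) = k" using sn(4)[of "nat k"] that by simp
      moreover have "nat k - 1 < n" using sn(2) that by linarith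
      ultimately show ?thesis using set_xs len_xs by (metis nth_mem)
    qed
    ultimately show ?thesis using sn(1) by blast
  qed
  then show "1 \<le> s_idx F" "int (s_idx F) \<notin> F"
    "\<And>k. 1 \<le> k \<Longrightarrow> k < int (s_idx F) \<Longrightarrow> k \<in> F"
    by (auto simp: s_def)
qed

lemma F_down_eq:
  fixes F :: "int set"
  assumes "finite F" "\<forall>f\<in>F. f > 0"
  shows "F_down F = (\<lambda>f. f - int (s_idx F)) ` {f \<in> F. int (s_idx F) < f}"
proof -
  define n where "n = card F"
  define xs where "xs = sorted_list_of_set F"
  define s where "s = s_idx F"
  have set_xs: "set xs = F" and len_xs: "length xs = n" and sorted_xs: "sorted_wrt (<) xs"
    using assms(1) by (simp_all add: xs_def n_def strict_sorted_list_of_set)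
  show ?thesis
  proof (cases "F = {} \<or> F = {1..int n}")
    case True
    then have "s = (if F = {} then 1 else n + 1)" "F_down F = {}"
      by (auto simp: s_def s_idx_def F_down_def n_def)
    with True show ?thesis by (auto simp: s_def)
  next
    case False
    then have F: "F \<noteq> {}" "F \<noteq> {1..int (card F)}" by (auto simp: n_def)
    note sn = s_idx_sorted_nth[OF assms F, folded xs_def s_def n_def]
    have F_down: "F_down F = {xs ! i - int s | i. s - 1 \<le> i \<and> i < n}"
      using False by (simp add: F_down_def Let_def n_def xs_def s_def)
    have "s - 1 \<le> i \<longleftrightarrow> int s < xs ! i" if "i < n" for i
    proof
      assume "s - 1 \<le> i"
      then show "int s < xs ! i"
        using strict_sorted_nth_gap[OF sorted_xs, of "s - 1" i] sn(3) that len_xs by simp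
    next
      assume "int s < xs ! i"
      then show "s - 1 \<le> i" using sn(4)[of "i + 1"] by fastforce
    qed
    then have "F_down F = (\<lambda>f. f - int s) ` {xs ! i | i. i < n \<and> int s < xs ! i}"
      unfolding F_down by blast
    also have "{xs ! i | i. i < n \<and> int s < xs ! i} = {f \<in> F. int s < f}"
      using set_xs len_xs by (auto simp: in_set_conv_nth)
    finally show ?thesis unfolding s_def .
  qed
qed

lemma mem_F_down_iff:
  fixes F :: "int set"
  assumes "finite F" "\<forall>f\<in>F. f > 0"
  shows "y \<in> F_down F \<longleftrightarrow> 0 < y \<and> y + int (s_idx F) \<in> F"
  unfolding F_down_eq[OF assms] by (force simp: image_iff)

lemma mem_reflected_image_iff:
  fixes a x :: "'a :: ab_group_add"
  shows "x \<in> (\<lambda>f. a - f) ` A \<longleftrightarrow> a - x \<in> A"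
  by (force simp: image_iff)

lemma mem_H_set_iff:
  "h \<in> H_set c F1 F2 \<longleftrightarrow>
     ((h \<in> F1 \<or> -c - h \<in> F2) \<and> \<not> (0 \<le> h \<and> h \<le> -c)) \<or> (h \<in> F1 \<and> -c - h \<in> F2)"
  unfolding H_set_def by (auto simp: mem_reflected_image_iff)

lemma covering_endpoints:
  fixes m :: int
  assumes "\<forall>f\<in>F1. f > 0" "\<forall>f\<in>F2. f > 0" "1 \<le> m"
    and "{0..m} \<subseteq> F1 \<union> (\<lambda>f. m - f) ` F2"
  shows "m \<in> F1" and "m \<in> F2"
  using assms subsetD[OF assms(4), of m] subsetD[OF assms(4), of 0]
  by (auto simp: mem_reflected_image_iff)

lemma covering_F_down:
  fixes c :: int
  assumes "finite F1" "\<forall>f\<in>F1. f > 0"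
    and "{0..-c} \<subseteq> F1 \<union> (\<lambda>f. -c - f) ` F2"
  defines "c' \<equiv> c + int (s_idx F1)"
  shows "{0..-c'} \<subseteq> F_down F1 \<union> (\<lambda>f. -c' - f) ` F2"
proof
  fix y assume y: "y \<in> {0..-c'}"
  note s = s_idx_least_missing[OF assms(1,2)]
  have "y + int (s_idx F1) \<in> F1 \<or> -c - (y + int (s_idx F1)) \<in> F2"
    using subsetD[OF assms(3), of "y + int (s_idx F1)"] y s(1)
    by (auto simp: c'_def mem_reflected_image_iff)
  moreover have "y + int (s_idx F1) \<in> F1 \<Longrightarrow> 0 < y"
    using y s(2) by (cases "y = 0") auto
  ultimately show "y \<in> F_down F1 \<union> (\<lambda>f. -c' - f) ` F2"
    unfolding Un_iff mem_reflected_image_iff mem_F_down_iff[OF assms(1,2)] c'_def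
    by (auto simp: algebra_simps)
qed

lemma H_set_F_down:
  fixes c :: int
  assumes "finite F1" "\<forall>f\<in>F1. f > 0" "\<forall>f\<in>F2. f > 0"
    and "-c \<in> F2" "int (s_idx F1) < -c"
  defines "s \<equiv> int (s_idx F1)"
  shows "H_set (c + s) (F_down F1) F2 = (\<lambda>h. h - s) ` insert 0 (H_set c F1 F2)"
proof (rule set_eqI)
  fix z
  note least = s_idx_least_missing[OF assms(1,2), folded s_def]
  have shift: "z \<in> (\<lambda>h. h - s) ` A \<longleftrightarrow> z + s \<in> A" for A
    by (force simp: image_iff)
  have reflect: "-(c + s) - z = -c - (z + s)" by simp
  \<comment> \<open>In the coordinate z + s the two windows differ only on [0, s), where F1 contains 1..s-1;
    the extra element 0 comes from -c \<in> F2.\<close>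
  consider "z + s < 0" | "z + s = 0" | "1 \<le> z + s \<and> z + s < s" | "z + s = s"
    | "s < z + s \<and> z + s \<le> -c" | "-c < z + s"
    by linarith
  then show "z \<in> H_set (c + s) (F_down F1) F2
      \<longleftrightarrow> z \<in> (\<lambda>h. h - s) ` insert 0 (H_set c F1 F2)"
    unfolding shift insert_iff mem_H_set_iff mem_F_down_iff[OF assms(1,2), folded s_def] reflect
    by cases (use assms(2-5) least in \<open>auto simp: s_def\<close>)
qed

lemma admissible_F_down:
  fixes c :: int
  assumes "finite F1" "finite F2" "\<forall>f\<in>F1. f > 0" "\<forall>f\<in>F2. f > 0"
    and "-c \<in> F2" "int (s_idx F1) < -c" and "admissible c F1 F2"
  shows "admissible (c + int (s_idx F1)) (F_down F1) F2"
  unfolding admissible_def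
proof (intro allI impI)
  define s where "s = int (s_idx F1)"
  define H where "H = H_set c F1 F2"
  fix x assume x: "0 \<le> x \<and> x \<notin> F_down F1"
  note least = s_idx_least_missing[OF assms(1,3), folded s_def]
  have "x + s \<notin> F1"
    using x least(2) by (cases "x = 0") (auto simp: mem_F_down_iff[OF assms(1,3)] s_def)
  then have H_nonneg: "0 \<le> (\<Prod>h\<in>H. (x + s) - h)"
    using assms(7) x least(1) unfolding admissible_def H_def s_def by simp
  have "finite H" using assms(1,2) by (simp add: H_def H_set_def)
  moreover have "0 \<notin> H" using assms(3,6) least(1) by (auto simp: H_def mem_H_set_iff)
  ultimately have "(\<Prod>h\<in>insert 0 H. x - (h - s)) = (x + s) * (\<Prod>h\<in>H. (x + s) - h)"
    by (simp add: algebra_simps)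
  also have "(\<Prod>h\<in>insert 0 H. x - (h - s))
      = (\<Prod>h\<in>H_set (c + s) (F_down F1) F2. x - h)"
    unfolding H_set_F_down[OF assms(1,3-6), folded s_def] H_def
    by (subst prod.reindex) (auto simp: inj_on_def)
  finally show "0 \<le> (\<Prod>h\<in>H_set (c + int (s_idx F1)) (F_down F1) F2. x - h)"
    using H_nonneg least(1) x by (simp add: s_def)
qed

lemma F_down_prod_nonneg:
  fixes c x :: int
  assumes "finite F1" "finite F2" "\<forall>f\<in>F1. f > 0" "\<forall>f\<in>F2. f > 0"
    and "-c < int (s_idx F1)" and "admissible c F1 F2" and "0 \<le> x"
  shows "0 \<le> (\<Prod>f\<in>F_down F1. x - f)"
proof -
  define s where "s = int (s_idx F1)"
  define H where "H = H_set c F1 F2"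
  define A where "A = {f \<in> F1. s < f}"
  note least = s_idx_least_missing[OF assms(1,3), folded s_def]
  have "finite A" using assms(1) by (simp add: A_def)
  have "finite H" using assms(1,2) by (simp add: H_def H_set_def)
  have "A \<subseteq> H" using assms(5) by (auto simp: A_def H_def s_def mem_H_set_iff)
  have prod_F_down: "(\<Prod>f\<in>F_down F1. x - f) = (\<Prod>f\<in>A. (x + s) - f)"
    unfolding F_down_eq[OF assms(1,3), folded s_def] A_def
    by (subst prod.reindex) (auto simp: inj_on_def algebra_simps)
  show ?thesis
  proof (cases "x + s \<in> F1")
    case True
    then have "x + s \<in> A" using least(2) assms(7) by (cases "x = 0") (auto simp: A_def)
    then show ?thesis using \<open>finite A\<close> by (simp add: prod_F_down prod_zero)
  next
    case False
    have "h < s" if h: "h \<in> H - A" for h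
    proof (cases "-c - h \<in> F2")
      case True
      then show ?thesis using assms(4,5) by (force simp: s_def)
    next
      case False
      then have "h \<in> F1" using h by (simp add: H_def mem_H_set_iff)
      moreover have "\<not> s < h" using h \<open>h \<in> F1\<close> by (simp add: A_def)
      ultimately show ?thesis using least(2) by (cases "h = s") auto
    qed
    then have "0 < (\<Prod>h\<in>H - A. (x + s) - h)"
      using assms(7) by (intro prod_pos) fastforce
    moreover have "0 \<le> (\<Prod>h\<in>H. (x + s) - h)"
      using assms(6,7) False least(1) unfolding admissible_def H_def s_def by simp
    moreover have "(\<Prod>h\<in>H. (x + s) - h)
        = (\<Prod>h\<in>H - A. (x + s) - h) * (\<Prod>h\<in>A. (x + s) - h)"
      using \<open>finite H\<close> \<open>A \<subseteq> H\<close> by (simp add: prod.subset_diff)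
    ultimately show ?thesis by (simp add: prod_F_down zero_le_mult_iff)
  qed
qed

lemma F_down_Gamma_weight_nonneg:
  fixes c x :: int
  assumes "finite F1" "finite F2" "\<forall>f\<in>F1. f > 0" "\<forall>f\<in>F2. f > 0"
    and "-c < int (s_idx F1)" and "admissible c F1 F2" and "0 \<le> x"
  defines "d \<equiv> c + int (s_idx F1)"
  shows "0 \<le> (\<Prod>f\<in>F_down F1. real_of_int (x - f)) * (\<Prod>f\<in>F2. real_of_int (x + d + f))
      * Gamma (real_of_int (x + d))"
proof -
  have "0 \<le> (\<Prod>f\<in>F_down F1. real_of_int (x - f))"
    using F_down_prod_nonneg[OF assms(1-7)] by (metis of_int_0_le_iff of_int_prod)
  moreover have "0 \<le> (\<Prod>f\<in>F2. real_of_int (x + d + f))"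
    using assms(4,5,7) by (intro prod_nonneg) (auto simp: d_def)
  moreover have "0 < Gamma (real_of_int (x + d))"
    using assms(5,7) by (simp add: d_def Gamma_real_pos_exp)
  ultimately show ?thesis by simp
qed

theorem mainTheorem13:
  fixes \<alpha> :: int and F1 F2 :: "int set"
  assumes "\<alpha> \<le> -2"
    and "finite F1" and "finite F2"
    and "\<forall>f\<in>F1. f > 0" and "\<forall>f\<in>F2. f > 0"
    and "{0..-\<alpha>-1} \<subseteq> F1 \<union> ((\<lambda>f. -\<alpha> - 1 - f) ` F2)"
    and "admissible (\<alpha> + 1) F1 F2"
  shows "\<alpha> + int (s_idx F1) \<noteq> -1
    \<and> (\<alpha> + int (s_idx F1) \<le> -2 \<longrightarrow>
         (let c' = \<alpha> + 1 + int (s_idx F1) in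
            {0..-c'} \<subseteq> F_down F1 \<union> ((\<lambda>f. -c' - f) ` F2)
            \<and> admissible c' (F_down F1) F2))
    \<and> (\<alpha> + int (s_idx F1) \<ge> 0 \<longrightarrow>
         (let d = \<alpha> + 1 + int (s_idx F1) in
            \<forall>x::int. 0 \<le> x \<longrightarrow>
              (\<Prod>f\<in>F_down F1. real_of_int (x - f)) * (\<Prod>f\<in>F2. real_of_int (x + d + f))
                * Gamma (real_of_int (x + d)) \<ge> 0))"
proof -
  define c where "c = \<alpha> + 1"
  define s where "s = int (s_idx F1)"
  have cover: "{0..-c} \<subseteq> F1 \<union> (\<lambda>f. -c - f) ` F2"
    using assms(6) by (simp add: c_def)
  have "-c \<in> F1" and "-c \<in> F2"
    using covering_endpoints[OF assms(4,5) _ cover] assms(1) by (simp_all add: c_def)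
  then have "s \<noteq> -c" using s_idx_least_missing(2)[OF assms(2,4)] by (auto simp: s_def)
  then have "\<alpha> + s \<noteq> -1" by (simp add: c_def)
  moreover have "{0..-(c + s)} \<subseteq> F_down F1 \<union> (\<lambda>f. -(c + s) - f) ` F2
      \<and> admissible (c + s) (F_down F1) F2" if "\<alpha> + s \<le> -2"
    using covering_F_down[OF assms(2,4) cover]
      admissible_F_down[OF assms(2-5) \<open>-c \<in> F2\<close> _ assms(7)[folded c_def]] that
    by (simp add: c_def s_def)
  moreover have "0 \<le> (\<Prod>f\<in>F_down F1. real_of_int (x - f))
      * (\<Prod>f\<in>F2. real_of_int (x + (c + s) + f)) * Gamma (real_of_int (x + (c + s)))"
    if "0 \<le> \<alpha> + s" "0 \<le> x" for x
    using F_down_Gamma_weight_nonneg[OF assms(2-5) _ assms(7)[folded c_def] \<open>0 \<le> x\<close>] that(1)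
    by (simp add: c_def s_def)
  ultimately show ?thesis unfolding c_def s_def Let_def by auto
qed

end
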